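(* Let $k,\ell$ be non-negative integers with $\ell<2k$. Let $D$ be an orientation of a $(k,\ell)$-sparse loopless multigraph $H=(V,F)$ in which every vertex has indegree at most $k$, and let $u,v\in V$ be distinct with $\varrho_D(u)+\varrho_D(v)=2k-\ell$. Let $S=\{w\in V\setminus\{u,v\}:\varrho_D(w)<k\}$, and let $T$ be the set of vertices of $V$ not reachable by a directed path in $D$ from any vertex of $S$. Then there exists a $(k,\ell)$-component of $H$ containing both $u$ and $v$ if and only if $u,v\in T$; and if such a component exists, it is exactly $T$.
   Context: For $X\subseteq V$, $i_H(X)$ is the number of edges of $H$ with both endpoints in $X$. $H$ is $(k,\ell)$-sparse if $i_H(X)\le\max\{k|X|-\ell,0\}$ for every $X\subseteq V$. A $(k,\ell)$-block of $H$ is a set $X\subseteq V$ with $i_H(X)=\max\{k|X|-\ell,0\}$; a $(k,\ell)$-component is an inclusion-wise maximal $(k,\ell)$-block. $\varrho_D(w)$ is the indegree of $w$ in $D$; every vertex of $S$ is considered reachable from $S$. *)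

theory Defs
  imports Main
begin

text \<open>A directed loopless multigraph D on vertex set V: a finite edge set F with
  tail and head maps. The underlying undirected multigraph is H = (V,F); D is an
  orientation of H.\<close>

definition loopless_digraph :: "'a set \<Rightarrow> 'e set \<Rightarrow> ('e \<Rightarrow> 'a) \<Rightarrow> ('e \<Rightarrow> 'a) \<Rightarrow> bool" where
  "loopless_digraph V F tail head \<longleftrightarrow> finite V \<and> finite F \<and>
     (\<forall>e\<in>F. tail e \<in> V \<and> head e \<in> V \<and> tail e \<noteq> head e)"

definition induced_edges :: "'e set \<Rightarrow> ('e \<Rightarrow> 'a) \<Rightarrow> ('e \<Rightarrow> 'a) \<Rightarrow> 'a set \<Rightarrow> nat" where
  "induced_edges F tail head X = card {e\<in>F. tail e \<in> X \<and> head e \<in> X}"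

definition sparse :: "nat \<Rightarrow> nat \<Rightarrow> 'a set \<Rightarrow> 'e set \<Rightarrow> ('e \<Rightarrow> 'a) \<Rightarrow> ('e \<Rightarrow> 'a) \<Rightarrow> bool" where
  "sparse k l V F tail head \<longleftrightarrow>
     (\<forall>X. X \<subseteq> V \<longrightarrow> int (induced_edges F tail head X) \<le> max (int k * int (card X) - int l) 0)"

definition block :: "nat \<Rightarrow> nat \<Rightarrow> 'a set \<Rightarrow> 'e set \<Rightarrow> ('e \<Rightarrow> 'a) \<Rightarrow> ('e \<Rightarrow> 'a) \<Rightarrow> 'a set \<Rightarrow> bool" where
  "block k l V F tail head X \<longleftrightarrow> X \<subseteq> V \<and>
     int (induced_edges F tail head X) = max (int k * int (card X) - int l) 0"

definition component :: "nat \<Rightarrow> nat \<Rightarrow> 'a set \<Rightarrow> 'e set \<Rightarrow> ('e \<Rightarrow> 'a) \<Rightarrow> ('e \<Rightarrow> 'a) \<Rightarrow> 'a set \<Rightarrow> bool" where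
  "component k l V F tail head X \<longleftrightarrow> block k l V F tail head X \<and>
     (\<forall>Y. block k l V F tail head Y \<longrightarrow> X \<subseteq> Y \<longrightarrow> Y = X)"

definition indeg :: "'e set \<Rightarrow> ('e \<Rightarrow> 'a) \<Rightarrow> 'a \<Rightarrow> nat" where
  "indeg F head w = card {e\<in>F. head e = w}"

text \<open>Arc relation of D; reachability is its reflexive transitive closure
  (so every vertex is reachable from itself).\<close>
definition arcs :: "'e set \<Rightarrow> ('e \<Rightarrow> 'a) \<Rightarrow> ('e \<Rightarrow> 'a) \<Rightarrow> ('a \<times> 'a) set" where
  "arcs F tail head = {(tail e, head e) | e. e \<in> F}"

end

theory Submission
  imports Defs
begin

(* Summing indegrees over a vertex set Y counts the edges induced by Y plus the arcs entering Y.
   If Y contains u and v, the indegree bounds make this sum at most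
   indeg u + indeg v + k (|Y| - 2) = k |Y| - l, so Y is a block exactly when no arc enters Y and
   every vertex of Y other than u, v has indegree k, i.e. Y avoids S. A set with no entering arc
   contains everything from which it can be reached, so such a Y lies in T; and T itself has no
   entering arc and avoids S. Hence T is the unique component through u and v when it contains
   both. *)

definition entering_arcs :: "'e set \<Rightarrow> ('e \<Rightarrow> 'a) \<Rightarrow> ('e \<Rightarrow> 'a) \<Rightarrow> 'a set \<Rightarrow> 'e set" where
  "entering_arcs F tail head X = {e \<in> F. tail e \<notin> X \<and> head e \<in> X}"

lemma induced_edges_add_card_entering_arcs:
  assumes "finite F" "finite X"
  shows "induced_edges F tail head X + card (entering_arcs F tail head X)
           = (\<Sum>w\<in>X. indeg F head w)"
proof -
  have "{e \<in> F. head e \<in> X}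
          = {e \<in> F. tail e \<in> X \<and> head e \<in> X} \<union> entering_arcs F tail head X"
    unfolding entering_arcs_def by blast
  then have "card {e \<in> F. head e \<in> X}
               = induced_edges F tail head X + card (entering_arcs F tail head X)"
    unfolding induced_edges_def entering_arcs_def
    using assms by (subst card_Un_disjoint[symmetric]) auto
  moreover have "{e \<in> F. head e \<in> X} = (\<Union>w\<in>X. {e \<in> F. head e = w})" by blast
  then have "card {e \<in> F. head e \<in> X} = (\<Sum>w\<in>X. indeg F head w)"
    unfolding indeg_def using assms by (simp add: card_UN_disjoint disjoint_iff)
  ultimately show ?thesis by simp
qed

lemma no_entering_arcs_rtrancl_closed:
  assumes "entering_arcs F tail head Y = {}" "(s, w) \<in> (arcs F tail head)\<^sup>*" "w \<in> Y"
  shows "s \<in> Y"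
  using assms(2,3)
proof (induction rule: converse_rtrancl_induct)
  case base
  then show ?case .
next
  case (step x y)
  then obtain e where "e \<in> F" "tail e = x" "head e = y" "y \<in> Y"
    unfolding arcs_def by auto
  then show ?case using assms(1) unfolding entering_arcs_def by blast
qed

lemma subset_unreachable_if_no_entering_arcs:
  assumes "Y \<subseteq> V" "Y \<inter> S = {}" "entering_arcs F tail head Y = {}"
  shows "Y \<subseteq> {w \<in> V. \<not> (\<exists>s\<in>S. (s, w) \<in> (arcs F tail head)\<^sup>*)}"
proof
  fix w assume "w \<in> Y"
  have "s \<notin> S" if "(s, w) \<in> (arcs F tail head)\<^sup>*" for s
    using no_entering_arcs_rtrancl_closed[OF assms(3) that \<open>w \<in> Y\<close>] assms(2) by blast
  then show "w \<in> {w \<in> V. \<not> (\<exists>s\<in>S. (s, w) \<in> (arcs F tail head)\<^sup>*)}"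
    using \<open>w \<in> Y\<close> assms(1) by blast
qed

lemma entering_arcs_unreachable_empty:
  assumes "\<forall>e\<in>F. tail e \<in> V"
  shows "entering_arcs F tail head {w \<in> V. \<not> (\<exists>s\<in>S. (s, w) \<in> (arcs F tail head)\<^sup>*)} = {}"
    (is "entering_arcs F tail head ?T = {}")
proof -
  have "tail e \<in> ?T" if "e \<in> F" "head e \<in> ?T" for e
  proof (rule ccontr)
    assume "tail e \<notin> ?T"
    then obtain s where "s \<in> S" "(s, tail e) \<in> (arcs F tail head)\<^sup>*"
      using assms \<open>e \<in> F\<close> by blast
    moreover have "(tail e, head e) \<in> arcs F tail head"
      using \<open>e \<in> F\<close> unfolding arcs_def by auto
    ultimately have "(s, head e) \<in> (arcs F tail head)\<^sup>*" by simp
    with \<open>s \<in> S\<close> \<open>head e \<in> ?T\<close> show False by blast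
  qed
  then show ?thesis unfolding entering_arcs_def by blast
qed

lemma block_iff_no_entering_arcs:
  assumes "l < 2 * k" "finite F" "finite Y" "Y \<subseteq> V" "u \<in> Y" "v \<in> Y" "u \<noteq> v"
    and indeg_le: "\<forall>w\<in>Y. indeg F head w \<le> k"
    and indeg_uv: "indeg F head u + indeg F head v = 2 * k - l"
  shows "block k l V F tail head Y \<longleftrightarrow>
           entering_arcs F tail head Y = {} \<and> (\<forall>w\<in>Y - {u, v}. indeg F head w = k)"
proof -
  let ?r = "indeg F head" and ?R = "Y - {u, v}"
  have card_R: "card ?R = card Y - 2"
    using assms(3,5-7) by (simp add: card_Diff_subset)
  have "card {u, v} \<le> card Y" using assms(3,5,6) by (intro card_mono) auto
  then have "2 \<le> card Y" using \<open>u \<noteq> v\<close> by simp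
  then have "2 * k \<le> k * card Y" by simp
  then have "l < k * card Y" using \<open>l < 2 * k\<close> by linarith
  have tight: "?r u + ?r v + card ?R * k = k * card Y - l"
    using \<open>2 \<le> card Y\<close> \<open>l < 2 * k\<close> indeg_uv card_R
    by (simp add: diff_mult_distrib algebra_simps)
  have sum_R_le: "sum ?r ?R \<le> card ?R * k"
    using sum_bounded_above[of ?R ?r k] indeg_le by simp
  have sum_R_eq_iff: "sum ?r ?R = card ?R * k \<longleftrightarrow> (\<forall>w\<in>?R. ?r w = k)"
  proof
    assume "sum ?r ?R = card ?R * k"
    then have "sum ?r ?R = sum (\<lambda>_. k) ?R" by simp
    then show "\<forall>w\<in>?R. ?r w = k"
      using indeg_le sum_mono_inv[where f = ?r and g = "\<lambda>_. k"] assms(3) by blast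
  qed simp
  have "induced_edges F tail head Y + card (entering_arcs F tail head Y) = ?r u + ?r v + sum ?r ?R"
    using induced_edges_add_card_entering_arcs[OF assms(2,3)] sum.subset_diff[of "{u, v}" Y ?r]
      assms(3,5-7) by simp
  with tight sum_R_le have tight_iff: "induced_edges F tail head Y = k * card Y - l \<longleftrightarrow>
      card (entering_arcs F tail head Y) = 0 \<and> sum ?r ?R = card ?R * k"
    by arith
  have "int l < int (k * card Y)" using \<open>l < k * card Y\<close> by (simp only: of_nat_less_iff)
  then have "max (int k * int (card Y) - int l) 0 = int (k * card Y - l)"
    using \<open>l < k * card Y\<close> by (simp add: of_nat_diff)
  then have "block k l V F tail head Y \<longleftrightarrow> induced_edges F tail head Y = k * card Y - l"
    using \<open>Y \<subseteq> V\<close> unfolding block_def by simp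
  moreover have "finite (entering_arcs F tail head Y)"
    using \<open>finite F\<close> unfolding entering_arcs_def by simp
  ultimately show ?thesis using tight_iff sum_R_eq_iff by simp
qed

theorem lemma4:
  fixes k l :: nat and V :: "'a set" and F :: "'e set"
    and tail head :: "'e \<Rightarrow> 'a" and u v :: 'a
  assumes "l < 2 * k"
    and "loopless_digraph V F tail head"
    and "sparse k l V F tail head"
    and "\<forall>w\<in>V. indeg F head w \<le> k"
    and "u \<in> V" and "v \<in> V" and "u \<noteq> v"
    and "indeg F head u + indeg F head v = 2 * k - l"
  defines "S \<equiv> {w \<in> V - {u, v}. indeg F head w < k}"
  defines "T \<equiv> {w \<in> V. \<not> (\<exists>s\<in>S. (s, w) \<in> (arcs F tail head)\<^sup>*)}"
  shows "((\<exists>C. component k l V F tail head C \<and> u \<in> C \<and> v \<in> C) \<longleftrightarrow> u \<in> T \<and> v \<in> T)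
     \<and> (\<forall>C. component k l V F tail head C \<and> u \<in> C \<and> v \<in> C \<longrightarrow> C = T)"
proof -
  have "finite V" "finite F" "\<forall>e\<in>F. tail e \<in> V"
    using assms(2) unfolding loopless_digraph_def by auto
  have block_iff: "block k l V F tail head Y \<longleftrightarrow> entering_arcs F tail head Y = {} \<and> Y \<inter> S = {}"
    if "Y \<subseteq> V" "u \<in> Y" "v \<in> Y" for Y
  proof -
    have "finite Y" using \<open>finite V\<close> \<open>Y \<subseteq> V\<close> finite_subset by blast
    have indeg_le: "\<forall>w\<in>Y. indeg F head w \<le> k" using \<open>Y \<subseteq> V\<close> assms(4) by blast
    have "w \<in> S \<longleftrightarrow> indeg F head w \<noteq> k" if "w \<in> Y - {u, v}" for w
      using that indeg_le \<open>Y \<subseteq> V\<close> unfolding S_def by auto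
    moreover have "S \<subseteq> V - {u, v}" unfolding S_def by blast
    ultimately have "(\<forall>w\<in>Y - {u, v}. indeg F head w = k) \<longleftrightarrow> Y \<inter> S = {}" by blast
    then show ?thesis
      using block_iff_no_entering_arcs[OF assms(1) \<open>finite F\<close> \<open>finite Y\<close> that assms(7)
          indeg_le assms(8)] by simp
  qed
  have T_greatest: "Y \<subseteq> T" if "block k l V F tail head Y" "u \<in> Y" "v \<in> Y" for Y
    using that block_iff subset_unreachable_if_no_entering_arcs[of Y V S F tail head]
    unfolding T_def block_def by blast
  have T_block: "block k l V F tail head T" if "u \<in> T" "v \<in> T"
    using that block_iff[of T] entering_arcs_unreachable_empty[OF \<open>\<forall>e\<in>F. tail e \<in> V\<close>]
    unfolding T_def by blast
  have "component k l V F tail head C \<and> u \<in> C \<and> v \<in> C \<longleftrightarrow> C = T \<and> u \<in> T \<and> v \<in> T" for C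
    using T_greatest T_block unfolding component_def by blast
  then show ?thesis by blast
qed

end
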